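(* Fix $\gamma\in(0,1]$ and $0<\alpha<0.25$, and let $\xi>0$ be an arbitrarily small number. Then for all sufficiently large $N$, $$\mathbb E\big[\|S-s^*\|^2\big]\le\frac{1}{N^{1-4\alpha-7\xi}}.$$
   Context: Model. Let $N\ge1$ be the number of servers, $\gamma\in(0,1]$ and $\alpha>0$ constants, and $\lambda=1-\gamma/N^{\alpha}$. Let $b=b(N)\ge1$ be an integer buffer size with $b=O(\log N)$. Each of the $N$ servers holds at most $b$ jobs; jobs arrive as a Poisson process of rate $\lambda N$, service times are i.i.d. exponential with rate $1$, and each arriving job samples two servers uniformly at random and joins the one with fewer jobs (ties broken uniformly). Let $S_i(t)$ be the fraction of servers with at least $i$ jobs; $S(t)=(S_1(t),\dots,S_b(t))$ is a continuous-time Markov chain on $\{s\in\{0,\frac1N,\dots,1\}^b:1\ge s_1\ge\cdots\ge s_b\ge0\}$ with, using $s_0=1$, $s_{b+1}=0$ and $e_k$ the $k$-th unit vector, transitions $s\to s+e_k/N$ at rate $\lambda N(s_{k-1}^2-s_k^2)$ and $s\to s-e_k/N$ at rate $N(s_k-s_{k+1})$. $S$ denotes a random vector with the stationary distribution of this chain. $s^*$ is the unique point of $\mathcal S=\{s\in\mathbb R^b:1\ge s_1\ge\cdots\ge s_b\ge0\}$ with $f(s^* )=0$, where $f_k(s)=\lambda(s_{k-1}^2-s_k^2)-(s_k-s_{k+1})$ (with $s_0=1,s_{b+1}=0$). $\|\cdot\|$ is the Euclidean norm. *)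

theory Defs
  imports "HOL-Analysis.Analysis" "HOL-Library.Landau_Symbols"
begin

text \<open>A state is a function nat => real; coordinates 1..b are s_1..s_b, all other
  coordinates are 0.  The boundary conventions s_0 = 1, s_(b+1) = 0 are
  implemented by ext.\<close>

definition ext :: "nat \<Rightarrow> (nat \<Rightarrow> real) \<Rightarrow> nat \<Rightarrow> real" where
  "ext b s k = (if k = 0 then 1 else if k \<le> b then s k else 0)"

definition lam :: "real \<Rightarrow> real \<Rightarrow> nat \<Rightarrow> real" where
  "lam \<gamma> \<alpha> N = 1 - \<gamma> / (real N powr \<alpha>)"

definition simplexS :: "nat \<Rightarrow> (nat \<Rightarrow> real) set" where
  "simplexS b = {s. (\<forall>k. k \<notin> {1..b} \<longrightarrow> s k = 0) \<and>
      (\<forall>k\<in>{1..b}. ext b s k \<le> ext b s (k - 1)) \<and> (\<forall>k\<in>{1..b}. 0 \<le> s k)}"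

definition state_space :: "nat \<Rightarrow> nat \<Rightarrow> (nat \<Rightarrow> real) set" where
  "state_space N b = {s \<in> simplexS b. \<forall>k\<in>{1..b}. \<exists>j::nat. j \<le> N \<and> s k = real j / real N}"

definition drift :: "nat \<Rightarrow> real \<Rightarrow> (nat \<Rightarrow> real) \<Rightarrow> nat \<Rightarrow> real" where
  "drift b l s k = l * ((ext b s (k - 1))\<^sup>2 - (ext b s k)\<^sup>2) - (ext b s k - ext b s (k + 1))"

definition is_fixed_point :: "nat \<Rightarrow> real \<Rightarrow> (nat \<Rightarrow> real) \<Rightarrow> bool" where
  "is_fixed_point b l s \<longleftrightarrow> s \<in> simplexS b \<and> (\<forall>k\<in>{1..b}. drift b l s k = 0)"

definition rate :: "nat \<Rightarrow> nat \<Rightarrow> real \<Rightarrow> (nat \<Rightarrow> real) \<Rightarrow> (nat \<Rightarrow> real) \<Rightarrow> real" where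
  "rate N b l s s' =
     (\<Sum>k\<in>{1..b}.
        (if s' = s(k := s k + 1 / real N)
         then l * real N * ((ext b s (k - 1))\<^sup>2 - (ext b s k)\<^sup>2) else 0)
      + (if s' = s(k := s k - 1 / real N)
         then real N * (ext b s k - ext b s (k + 1)) else 0))"

definition is_stationary :: "nat \<Rightarrow> nat \<Rightarrow> real \<Rightarrow> ((nat \<Rightarrow> real) \<Rightarrow> real) \<Rightarrow> bool" where
  "is_stationary N b l \<pi> \<longleftrightarrow>
     (\<forall>s\<in>state_space N b. 0 \<le> \<pi> s) \<and>
     (\<Sum>s\<in>state_space N b. \<pi> s) = 1 \<and>
     (\<forall>x\<in>state_space N b.
        \<pi> x * (\<Sum>y\<in>state_space N b - {x}. rate N b l x y) =
        (\<Sum>y\<in>state_space N b - {x}. \<pi> y * rate N b l y x))"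

definition exp_sq_dist :: "nat \<Rightarrow> nat \<Rightarrow> ((nat \<Rightarrow> real) \<Rightarrow> real) \<Rightarrow> (nat \<Rightarrow> real) \<Rightarrow> real" where
  "exp_sq_dist N b \<pi> sstar =
     (\<Sum>s\<in>state_space N b. \<pi> s * (\<Sum>k\<in>{1..b}. (s k - sstar k)\<^sup>2))"

end

theory Submission
  imports Defs "HOL-Real_Asymp.Real_Asymp"
begin

text \<open>
  Global balance makes the generator \<open>G\<close> of the chain average to zero under the stationary
  law, so a drift bound \<open>G V \<le> - c F + K\<close> on the state space gives \<open>E F(S) \<le> K / c\<close>.
  We take \<open>V = L\<^sup>2\<close>, where \<open>L x = (\<Sum>k. v\<^sub>k H\<^sub>e(x\<^sub>k - s*\<^sub>k))\<close> is a weighted Huber distance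
  to the fixed point and \<open>e = 1 / sqrt N\<close>. As \<open>s*\<close> is a zero of the drift, the drift at \<open>x\<close>
  is a tridiagonal linear expression in \<open>x - s*\<close>; summation by parts moves it onto the weights,
  which are built from \<open>s*\<close> so that the adjoint is uniformly negative:
  \<open>(v\<^sub>k\<^sub>-\<^sub>1 - v\<^sub>k) + q (v\<^sub>k\<^sub>+\<^sub>1 - v\<^sub>k) \<le> - v\<^sub>k / ((b + 1) v\<^sub>b)\<close> whenever \<open>0 \<le> q \<le> 1 + s*\<^sub>k\<close>.
  The curvature of \<open>H\<^sub>e\<close> makes the jumps of size \<open>1/N\<close> cost only \<open>O(1/N)\<close>, and comparing
  \<open>L\<close> with the Euclidean distance gives \<open>E \<bar>S - s*\<bar>\<^sup>2 = O(b\<^sup>8 d\<^sub>1\<^sup>2 / N)\<close>, where \<open>d\<^sub>1\<close> is the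
  largest weight increment. Finally the fixed point decays doubly exponentially,
  \<open>s*\<^sub>k \<le> \<lambda> ^ 2 ^ (k - 1)\<close>, so only \<open>O(log (1 / (1 - \<lambda>)))\<close> of its coordinates exceed \<open>1/2\<close>
  and \<open>d\<^sub>1 = O(1 / (1 - \<lambda>)) = O(N\<^sup>\<alpha> / \<gamma>)\<close>. With \<open>b = O(log N)\<close> the error is
  \<open>N\<^sup>2\<^sup>\<alpha>\<^sup>-\<^sup>1\<close> up to logarithmic factors, well within the claimed bound.
\<close>

section \<open>Huber function\<close>

definition huber :: "real \<Rightarrow> real \<Rightarrow> real" where
  "huber e x = (if \<bar>x\<bar> \<le> e then x\<^sup>2 / (2 * e) else \<bar>x\<bar> - e / 2)"

definition huber_deriv :: "real \<Rightarrow> real \<Rightarrow> real" where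
  "huber_deriv e x = (if \<bar>x\<bar> \<le> e then x / e else sgn x)"

context
  fixes e :: real
  assumes e_pos: "0 < e"
begin

lemma huber_nonneg: "0 \<le> huber e x"
  using e_pos by (auto simp: huber_def)

lemma half_square_eq: "x\<^sup>2 / (2 * e) = (\<bar>x\<bar> - e)\<^sup>2 / (2 * e) + (\<bar>x\<bar> - e / 2)"
  using e_pos by (simp add: field_simps power2_eq_square)

lemma huber_le_square: "huber e x \<le> x\<^sup>2 / (2 * e)"
  using half_square_eq[of x] e_pos by (simp add: huber_def)

lemma abs_le_huber: "\<bar>x\<bar> - e / 2 \<le> huber e x"
  using half_square_eq[of x] e_pos by (simp add: huber_def)

lemma huber_le_abs: "huber e x \<le> \<bar>x\<bar>"
proof (cases "\<bar>x\<bar> \<le> e")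
  case True
  have "x\<^sup>2 = \<bar>x\<bar> * \<bar>x\<bar>"
    by (simp add: power2_eq_square)
  also have "\<dots> \<le> \<bar>x\<bar> * (2 * e)"
    using True e_pos by (intro mult_left_mono) auto
  finally show ?thesis
    using True e_pos by (simp add: huber_def pos_divide_le_eq)
qed (use e_pos in \<open>simp add: huber_def\<close>)

lemma huber_minus [simp]: "huber e (- x) = huber e x"
  by (simp add: huber_def)

lemma huber_deriv_minus [simp]: "huber_deriv e (- x) = - huber_deriv e x"
  by (simp add: huber_deriv_def sgn_minus)

lemma abs_huber_deriv_le_1: "\<bar>huber_deriv e x\<bar> \<le> 1"
  using e_pos by (auto simp: huber_deriv_def abs_sgn_eq divide_le_eq)

lemma huber_deriv_mult_ge: "\<bar>x\<bar> - e \<le> huber_deriv e x * x"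
proof (cases "\<bar>x\<bar> \<le> e")
  case True
  have "0 \<le> x * x / e"
    using e_pos by simp
  moreover have "huber_deriv e x * x = x * x / e"
    using True by (simp add: huber_deriv_def)
  ultimately show ?thesis
    using True by linarith
qed (use e_pos in \<open>simp add: huber_deriv_def sgn_if\<close>)

lemma huber_eq_profile: "huber e x = (min \<bar>x\<bar> e)\<^sup>2 / (2 * e) + max (\<bar>x\<bar> - e) 0"
  using e_pos by (auto simp: huber_def min_def max_def field_simps power2_eq_square)

lemma huber_profile_increment:
  assumes "0 \<le> s" "s \<le> t"
  shows "(min t e)\<^sup>2 / (2 * e) + max (t - e) 0 - ((min s e)\<^sup>2 / (2 * e) + max (s - e) 0) \<le> t - s"
proof -
  have "(min t e)\<^sup>2 - (min s e)\<^sup>2 = (min t e - min s e) * (min t e + min s e)"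
    by (simp add: power2_eq_square algebra_simps)
  also have "\<dots> \<le> (min t e - min s e) * (2 * e)"
    using assms by (intro mult_left_mono) auto
  finally have "(min t e)\<^sup>2 / (2 * e) - (min s e)\<^sup>2 / (2 * e) \<le> min t e - min s e"
    using e_pos by (simp add: diff_divide_distrib[symmetric] divide_le_eq)
  then show ?thesis
    by (simp add: min_def max_def split: if_splits)
qed

lemma huber_lipschitz: "\<bar>huber e y - huber e x\<bar> \<le> \<bar>y - x\<bar>"
proof -
  have mono: "huber e x \<le> huber e y \<and> huber e y - huber e x \<le> \<bar>y\<bar> - \<bar>x\<bar>"
    if "\<bar>x\<bar> \<le> \<bar>y\<bar>" for x y
  proof
    have "(min \<bar>x\<bar> e)\<^sup>2 / (2 * e) \<le> (min \<bar>y\<bar> e)\<^sup>2 / (2 * e)"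
      using that e_pos by (intro divide_right_mono power_mono) auto
    moreover have "max (\<bar>x\<bar> - e) 0 \<le> max (\<bar>y\<bar> - e) 0"
      using that by simp
    ultimately show "huber e x \<le> huber e y"
      unfolding huber_eq_profile by linarith
    show "huber e y - huber e x \<le> \<bar>y\<bar> - \<bar>x\<bar>"
      unfolding huber_eq_profile using huber_profile_increment[of "\<bar>x\<bar>" "\<bar>y\<bar>"] that by simp
  qed
  show ?thesis
  proof (cases "\<bar>x\<bar> \<le> \<bar>y\<bar>")
    case True
    then show ?thesis
      using mono[of x y] abs_triangle_ineq2[of y x] unfolding abs_le_iff by linarith
  next
    case False
    then show ?thesis
      using mono[of y x] abs_triangle_ineq2[of x y] unfolding abs_le_iff abs_minus_commute[of x y]
      by linarith
  qed
qed

lemma huber_taylor_nonneg: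
  assumes "0 \<le> x" "\<bar>h\<bar> \<le> e"
  shows "huber e (x + h) \<le> huber e x + huber_deriv e x * h + h\<^sup>2 / (2 * e)"
proof (cases "x \<le> e")
  case True
  have "huber e x + huber_deriv e x * h + h\<^sup>2 / (2 * e) = (x + h)\<^sup>2 / (2 * e)"
    using True assms e_pos by (simp add: huber_def huber_deriv_def field_simps power2_eq_square)
  then show ?thesis
    using huber_le_square by simp
next
  case False
  then have rhs: "huber e x + huber_deriv e x * h + h\<^sup>2 / (2 * e) = x + h - e / 2 + h\<^sup>2 / (2 * e)"
    using assms by (simp add: huber_def huber_deriv_def)
  show ?thesis
  proof (cases "x + h \<le> e")
    case True
    \<comment> \<open>here \<open>0 \<le> e - (x + h) \<le> - h\<close>\<close>
    have "(x + h - e)\<^sup>2 \<le> h\<^sup>2"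
      using True False assms by (subst abs_le_square_iff[symmetric]) auto
    then have "(x + h - e)\<^sup>2 / (2 * e) \<le> h\<^sup>2 / (2 * e)"
      using e_pos by (simp add: divide_right_mono)
    moreover have "(x + h)\<^sup>2 / (2 * e) = (x + h - e)\<^sup>2 / (2 * e) + (x + h - e / 2)"
      using e_pos by (simp add: field_simps power2_eq_square)
    ultimately have "(x + h)\<^sup>2 / (2 * e) \<le> x + h - e / 2 + h\<^sup>2 / (2 * e)"
      by simp
    then show ?thesis
      using True False assms rhs by (simp add: huber_def)
  next
    case False
    then show ?thesis
      using rhs e_pos by (simp add: huber_def)
  qed
qed

lemma huber_taylor:
  assumes "\<bar>h\<bar> \<le> e"
  shows "huber e (x + h) \<le> huber e x + huber_deriv e x * h + h\<^sup>2 / (2 * e)"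
proof (cases "0 \<le> x")
  case False
  then show ?thesis
    using huber_taylor_nonneg[of "- x" "- h"] huber_minus[of "x + h"] assms by simp
qed (use huber_taylor_nonneg assms in blast)

end

section \<open>States and jumps\<close>

lemma ext_0 [simp]: "ext b s 0 = 1"
  by (simp add: ext_def)

lemma ext_greater [simp]: "b < k \<Longrightarrow> ext b s k = 0"
  by (simp add: ext_def)

lemma ext_in_range [simp]: "k \<in> {1..b} \<Longrightarrow> ext b s k = s k"
  by (simp add: ext_def)

lemma ext_fun_upd: "k \<in> {1..b} \<Longrightarrow> ext b (s(k := w)) i = (if i = k then w else ext b s i)"
  by (auto simp: ext_def)

lemma simplexS_ext_nonneg: "s \<in> simplexS b \<Longrightarrow> 0 \<le> ext b s k"
  unfolding simplexS_def ext_def by auto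

lemma simplexS_ext_Suc_le:
  assumes "s \<in> simplexS b"
  shows "ext b s (Suc k) \<le> ext b s k"
proof (cases "Suc k \<le> b")
  case True
  then have "Suc k \<in> {1..b}"
    by simp
  then have "ext b s (Suc k) \<le> ext b s (Suc k - 1)"
    using assms unfolding simplexS_def by blast
  then show ?thesis
    by simp
qed (simp add: simplexS_ext_nonneg[OF assms])

lemma simplexS_ext_antimono: "s \<in> simplexS b \<Longrightarrow> i \<le> j \<Longrightarrow> ext b s j \<le> ext b s i"
  by (rule lift_Suc_antimono_le[of "ext b s"]) (auto intro: simplexS_ext_Suc_le)

lemma simplexS_ext_le_1: "s \<in> simplexS b \<Longrightarrow> ext b s k \<le> 1"
  using simplexS_ext_antimono[of s b 0 k] by simp

lemma simplexS_fun_upd: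
  assumes s: "s \<in> simplexS b" and k: "k \<in> {1..b}"
    and lower: "ext b s (k + 1) \<le> w" and upper: "w \<le> ext b s (k - 1)"
  shows "s(k := w) \<in> simplexS b"
  unfolding simplexS_def
proof (intro CollectI conjI ballI allI impI)
  fix i
  assume "i \<notin> {1..b}"
  then show "(s(k := w)) i = 0"
    using s k unfolding simplexS_def by auto
next
  fix i
  assume i: "i \<in> {1..b}"
  have "ext b s i \<le> ext b s (i - 1)"
    using s i unfolding simplexS_def by blast
  moreover have "ext b s i \<le> w" if "i = k + 1"
    using lower that by simp
  ultimately show "ext b (s(k := w)) i \<le> ext b (s(k := w)) (i - 1)"
    using upper i k by (auto simp: ext_fun_upd)
  have "0 \<le> w"
    using lower simplexS_ext_nonneg[OF s, of "k + 1"] by linarith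
  then show "0 \<le> (s(k := w)) i"
    using s i unfolding simplexS_def by auto
qed

lemma finite_state_space: "finite (state_space N b)"
proof -
  let ?G = "(\<lambda>j. real j / real N) ` {..N}"
  have "state_space N b \<subseteq> {f. \<forall>x. (x \<in> {1..b} \<longrightarrow> f x \<in> ?G) \<and> (x \<notin> {1..b} \<longrightarrow> f x = 0)}"
    unfolding state_space_def simplexS_def by auto
  moreover have "finite {f. \<forall>x. (x \<in> {1..b} \<longrightarrow> f x \<in> ?G) \<and> (x \<notin> {1..b} \<longrightarrow> f x = (0::real))}"
    by (rule finite_set_of_finite_funs) auto
  ultimately show ?thesis
    by (rule finite_subset)
qed

lemma state_space_ext_grid:
  assumes "x \<in> state_space N b" "1 \<le> N"
  shows "\<exists>j\<le>N. ext b x k = real j / real N"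
proof -
  consider "k = 0" | "k \<in> {1..b}" | "b < k"
    by force
  then show ?thesis
  proof cases
    case 1
    then show ?thesis
      using assms by (intro exI[of _ N]) auto
  next
    case 2
    then show ?thesis
      using assms unfolding state_space_def by auto
  qed (auto intro: exI[of _ 0])
qed

lemma state_space_fun_upd:
  assumes x: "x \<in> state_space N b" and k: "k \<in> {1..b}" and "j \<le> N"
    and "ext b x (k + 1) \<le> real j / real N" "real j / real N \<le> ext b x (k - 1)"
  shows "x(k := real j / real N) \<in> state_space N b"
  using assms simplexS_fun_upd[of x b k "real j / real N"] unfolding state_space_def by auto

lemma grid_less_imp_Suc_le: "0 < N \<Longrightarrow> real i / real N < real j / real N \<Longrightarrow> Suc i \<le> j"
  by (simp add: divide_less_cancel)

lemma state_space_step_up: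
  assumes x: "x \<in> state_space N b" and N: "1 \<le> N" and k: "k \<in> {1..b}"
    and less: "ext b x k < ext b x (k - 1)"
  shows "x(k := x k + 1 / real N) \<in> state_space N b"
proof -
  obtain i j where i: "ext b x k = real i / real N" and j: "j \<le> N" "ext b x (k - 1) = real j / real N"
    using state_space_ext_grid[OF x N] by metis
  then have "Suc i \<le> j"
    using grid_less_imp_Suc_le[of N i j] less N by simp
  moreover have "ext b x (k + 1) \<le> ext b x k"
    using x simplexS_ext_Suc_le unfolding state_space_def by auto
  moreover have "real i / real N \<le> real (Suc i) / real N"
    by (intro divide_right_mono) auto
  moreover have "real (Suc i) / real N \<le> real j / real N"
    using \<open>Suc i \<le> j\<close> by (intro divide_right_mono) auto
  ultimately have "x(k := real (Suc i) / real N) \<in> state_space N b"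
    using i j by (intro state_space_fun_upd[OF x k]) auto
  moreover have "x k + 1 / real N = real (Suc i) / real N"
    using i k by (simp add: add_divide_distrib)
  ultimately show ?thesis
    by simp
qed

lemma state_space_step_down:
  assumes x: "x \<in> state_space N b" and N: "1 \<le> N" and k: "k \<in> {1..b}"
    and less: "ext b x (k + 1) < ext b x k"
  shows "x(k := x k - 1 / real N) \<in> state_space N b"
proof -
  obtain i j where i: "ext b x (k + 1) = real i / real N" and j: "j \<le> N" "ext b x k = real j / real N"
    using state_space_ext_grid[OF x N] by metis
  then have "Suc i \<le> j"
    using grid_less_imp_Suc_le[of N i j] less N by simp
  moreover have "ext b x k \<le> ext b x (k - 1)"
    using x simplexS_ext_antimono[of x b "k - 1" k] unfolding state_space_def by auto
  moreover have "real i / real N \<le> real (j - 1) / real N"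
    using \<open>Suc i \<le> j\<close> by (intro divide_right_mono) auto
  moreover have "real (j - 1) / real N \<le> real j / real N"
    by (intro divide_right_mono) auto
  ultimately have "x(k := real (j - 1) / real N) \<in> state_space N b"
    using i j by (intro state_space_fun_upd[OF x k]) auto
  moreover have "x k - 1 / real N = real (j - 1) / real N"
    using j k \<open>Suc i \<le> j\<close> by (simp add: of_nat_diff diff_divide_distrib)
  ultimately show ?thesis
    by simp
qed

section \<open>Generator and stationarity\<close>

definition generator ::
    "nat \<Rightarrow> nat \<Rightarrow> real \<Rightarrow> ((nat \<Rightarrow> real) \<Rightarrow> real) \<Rightarrow> (nat \<Rightarrow> real) \<Rightarrow> real" where
  "generator N b l V x = (\<Sum>y\<in>state_space N b - {x}. rate N b l x y * (V y - V x))"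

lemma sum_if_eq_mult:
  fixes f :: "'a \<Rightarrow> real"
  assumes "finite A" "c \<noteq> 0 \<Longrightarrow> a \<in> A"
  shows "(\<Sum>y\<in>A. (if y = a then c else 0) * f y) = c * f a"
proof -
  have "(\<Sum>y\<in>A. (if y = a then c else 0) * f y) = (\<Sum>y\<in>A. if y = a then c * f y else 0)"
    by (intro sum.cong) auto
  also have "\<dots> = c * f a"
    using assms by (cases "c = 0") (simp_all add: sum.delta)
  finally show ?thesis .
qed

lemma fun_upd_neq_self: "v \<noteq> f x \<Longrightarrow> f(x := v) \<noteq> f"
  by (metis fun_upd_same)

definition arrival_rate :: "nat \<Rightarrow> real \<Rightarrow> (nat \<Rightarrow> real) \<Rightarrow> nat \<Rightarrow> real" where
  "arrival_rate b l x k = l * ((ext b x (k - 1))\<^sup>2 - (ext b x k)\<^sup>2)"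

definition departure_rate :: "nat \<Rightarrow> (nat \<Rightarrow> real) \<Rightarrow> nat \<Rightarrow> real" where
  "departure_rate b x k = ext b x k - ext b x (k + 1)"

lemma drift_eq_rates: "drift b l x k = arrival_rate b l x k - departure_rate b x k"
  by (simp add: drift_def arrival_rate_def departure_rate_def)

lemma rate_eq:
  "rate N b l x y = (\<Sum>k\<in>{1..b}.
      (if y = x(k := x k + 1 / real N) then real N * arrival_rate b l x k else 0)
    + (if y = x(k := x k - 1 / real N) then real N * departure_rate b x k else 0))"
  unfolding rate_def arrival_rate_def departure_rate_def by (simp add: mult_ac cong: if_cong)

lemma step_up_mem:
  assumes x: "x \<in> state_space N b" and N: "1 \<le> N" and k: "k \<in> {1..b}"
    and "arrival_rate b l x k \<noteq> 0"
  shows "x(k := x k + 1 / real N) \<in> state_space N b - {x}"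
proof -
  have xs: "x \<in> simplexS b"
    using x unfolding state_space_def by auto
  have "ext b x k \<noteq> ext b x (k - 1)"
    using assms(4) unfolding arrival_rate_def by auto
  then have "ext b x k < ext b x (k - 1)"
    using simplexS_ext_antimono[OF xs, of "k - 1" k] by (simp add: order.not_eq_order_implies_strict)
  moreover have "x(k := x k + 1 / real N) \<noteq> x"
    using N by (intro fun_upd_neq_self) simp
  ultimately show ?thesis
    using state_space_step_up[OF x N k] by blast
qed

lemma step_down_mem:
  assumes x: "x \<in> state_space N b" and N: "1 \<le> N" and k: "k \<in> {1..b}"
    and "departure_rate b x k \<noteq> 0"
  shows "x(k := x k - 1 / real N) \<in> state_space N b - {x}"
proof -
  have xs: "x \<in> simplexS b"
    using x unfolding state_space_def by auto
  have "ext b x (k + 1) \<noteq> ext b x k"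
    using assms(4) unfolding departure_rate_def by auto
  then have "ext b x (k + 1) < ext b x k"
    using simplexS_ext_Suc_le[OF xs, of k] by (simp add: order.not_eq_order_implies_strict)
  moreover have "x(k := x k - 1 / real N) \<noteq> x"
    using N by (intro fun_upd_neq_self) simp
  ultimately show ?thesis
    using state_space_step_down[OF x N k] by blast
qed

lemma generator_eq:
  assumes x: "x \<in> state_space N b" and N: "1 \<le> N"
  shows "generator N b l V x = (\<Sum>k\<in>{1..b}.
      real N * arrival_rate b l x k * (V (x(k := x k + 1 / real N)) - V x)
    + real N * departure_rate b x k * (V (x(k := x k - 1 / real N)) - V x))"
proof -
  let ?S = "state_space N b - {x}"
  let ?up = "\<lambda>k. x(k := x k + 1 / real N)" and ?down = "\<lambda>k. x(k := x k - 1 / real N)"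
  define W where "W y = V y - V x" for y
  have fin: "finite ?S"
    using finite_state_space by simp
  have "generator N b l V x = (\<Sum>k\<in>{1..b}. \<Sum>y\<in>?S.
      (if y = ?up k then real N * arrival_rate b l x k else 0) * W y
    + (if y = ?down k then real N * departure_rate b x k else 0) * W y)"
    unfolding generator_def rate_eq W_def
    by (subst sum.swap) (simp add: sum_distrib_right distrib_right)
  also have "\<dots> = (\<Sum>k\<in>{1..b}.
      real N * arrival_rate b l x k * W (?up k) + real N * departure_rate b x k * W (?down k))"
  proof (intro sum.cong refl)
    fix k
    assume k: "k \<in> {1..b}"
    have "(\<Sum>y\<in>?S. (if y = ?up k then real N * arrival_rate b l x k else 0) * W y)
        = real N * arrival_rate b l x k * W (?up k)"
      by (rule sum_if_eq_mult[OF fin]) (use step_up_mem[OF x N k] in auto)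
    moreover have "(\<Sum>y\<in>?S. (if y = ?down k then real N * departure_rate b x k else 0) * W y)
        = real N * departure_rate b x k * W (?down k)"
      by (rule sum_if_eq_mult[OF fin]) (use step_down_mem[OF x N k] in auto)
    ultimately show "(\<Sum>y\<in>?S. (if y = ?up k then real N * arrival_rate b l x k else 0) * W y
        + (if y = ?down k then real N * departure_rate b x k else 0) * W y)
      = real N * arrival_rate b l x k * W (?up k) + real N * departure_rate b x k * W (?down k)"
      by (simp add: sum.distrib)
  qed
  finally show ?thesis
    unfolding W_def .
qed

lemma sum_swap_off_diagonal:
  assumes "finite A"
  shows "(\<Sum>x\<in>A. \<Sum>y\<in>A - {x}. f x y) = (\<Sum>y\<in>A. \<Sum>x\<in>A - {y}. f x y)"
proof -
  have "(\<Sum>x\<in>A. \<Sum>y\<in>A - {x}. f x y) = (\<Sum>x\<in>A. \<Sum>y\<in>{y\<in>A. x \<noteq> y}. f x y)"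
    by (intro sum.cong) auto
  also have "\<dots> = (\<Sum>y\<in>A. \<Sum>x\<in>{x\<in>A. x \<noteq> y}. f x y)"
    by (rule sum.swap_restrict[OF assms assms])
  also have "\<dots> = (\<Sum>y\<in>A. \<Sum>x\<in>A - {y}. f x y)"
    by (intro sum.cong) auto
  finally show ?thesis .
qed

lemma stationary_sum_generator:
  assumes "is_stationary N b l \<pi>"
  shows "(\<Sum>x\<in>state_space N b. \<pi> x * generator N b l V x) = 0"
proof -
  let ?S = "state_space N b"
  have balance: "\<pi> x * (\<Sum>y\<in>?S - {x}. rate N b l x y) = (\<Sum>y\<in>?S - {x}. \<pi> y * rate N b l y x)"
    if "x \<in> ?S" for x
    using assms that unfolding is_stationary_def by blast
  have "\<pi> x * generator N b l V x
      = (\<Sum>y\<in>?S - {x}. \<pi> x * rate N b l x y * V y) - V x * (\<pi> x * (\<Sum>y\<in>?S - {x}. rate N b l x y))"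
    for x
  proof -
    have "\<pi> x * generator N b l V x
        = (\<Sum>y\<in>?S - {x}. \<pi> x * rate N b l x y * V y - V x * (\<pi> x * rate N b l x y))"
      unfolding generator_def sum_distrib_left by (intro sum.cong refl) (simp add: algebra_simps)
    then show ?thesis
      by (simp add: sum_subtractf sum_distrib_left)
  qed
  then have "(\<Sum>x\<in>?S. \<pi> x * generator N b l V x)
      = (\<Sum>x\<in>?S. \<Sum>y\<in>?S - {x}. \<pi> x * rate N b l x y * V y)
        - (\<Sum>x\<in>?S. V x * (\<pi> x * (\<Sum>y\<in>?S - {x}. rate N b l x y)))"
    by (simp add: sum_subtractf)
  also have "(\<Sum>x\<in>?S. \<Sum>y\<in>?S - {x}. \<pi> x * rate N b l x y * V y)
      = (\<Sum>y\<in>?S. V y * (\<Sum>x\<in>?S - {y}. \<pi> x * rate N b l x y))"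
    by (subst sum_swap_off_diagonal[OF finite_state_space]) (simp add: sum_distrib_left mult_ac)
  also have "\<dots> = (\<Sum>y\<in>?S. V y * (\<pi> y * (\<Sum>x\<in>?S - {y}. rate N b l y x)))"
    using balance by simp
  finally show ?thesis
    by simp
qed

lemma stationary_drift_bound:
  assumes st: "is_stationary N b l \<pi>" and c: "0 < c"
    and drift: "\<And>x. x \<in> state_space N b \<Longrightarrow> generator N b l V x \<le> - c * F x + K"
  shows "(\<Sum>x\<in>state_space N b. \<pi> x * F x) \<le> K / c"
proof -
  let ?S = "state_space N b"
  have "0 = (\<Sum>x\<in>?S. \<pi> x * generator N b l V x)"
    using stationary_sum_generator[OF st] by simp
  also have "\<dots> \<le> (\<Sum>x\<in>?S. \<pi> x * (- c * F x + K))"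
    using st drift unfolding is_stationary_def by (intro sum_mono mult_left_mono) auto
  also have "\<dots> = - c * (\<Sum>x\<in>?S. \<pi> x * F x) + K * (\<Sum>x\<in>?S. \<pi> x)"
    by (simp add: algebra_simps sum_subtractf sum_distrib_left sum_negf)
  also have "\<dots> = - c * (\<Sum>x\<in>?S. \<pi> x * F x) + K"
    using st unfolding is_stationary_def by simp
  finally show ?thesis
    using c by (simp add: field_simps)
qed

section \<open>The fixed point\<close>

lemma fixed_point_simplexS: "is_fixed_point b l y \<Longrightarrow> y \<in> simplexS b"
  by (simp add: is_fixed_point_def)

lemma fixed_point_tail_eq:
  assumes fp: "is_fixed_point b l y" and m: "m \<in> {1..b}"
  shows "ext b y m = l * ((ext b y (m - 1))\<^sup>2 - (ext b y b)\<^sup>2)"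
proof -
  have drift: "l * ((ext b y (k - 1))\<^sup>2 - (ext b y k)\<^sup>2) - (ext b y k - ext b y (k + 1)) = 0"
    if "k \<in> {1..b}" for k
    using fp that unfolding is_fixed_point_def drift_def by blast
  from m have "m \<le> b" by simp
  then show ?thesis
  proof (induction m rule: inc_induct)
    case base
    show ?case
      using drift[of b] m by simp
  next
    case (step n)
    then show ?case
      using drift[of n] m by (simp add: algebra_simps)
  qed
qed

context
  fixes b :: nat and l :: real and y :: "nat \<Rightarrow> real"
  assumes fp: "is_fixed_point b l y" and l: "0 \<le> l" "l \<le> 1"
begin

lemma fixed_point_le_square: "m \<in> {1..b} \<Longrightarrow> ext b y m \<le> (ext b y (m - 1))\<^sup>2"
proof -
  assume m: "m \<in> {1..b}"
  have ys: "y \<in> simplexS b"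
    using fp by (rule fixed_point_simplexS)
  have "(ext b y b)\<^sup>2 \<le> (ext b y (m - 1))\<^sup>2"
    using m simplexS_ext_antimono[OF ys, of "m - 1" b] simplexS_ext_nonneg[OF ys, of b]
    by (intro power_mono) auto
  then have "l * ((ext b y (m - 1))\<^sup>2 - (ext b y b)\<^sup>2) \<le> (ext b y (m - 1))\<^sup>2"
    using l by (smt (verit) mult_left_le_one_le zero_le_power2)
  then show ?thesis
    using fixed_point_tail_eq[OF fp m] by simp
qed

lemma fixed_point_1_le: "ext b y 1 \<le> l"
proof (cases "1 \<le> b")
  case True
  have "0 \<le> (ext b y b)\<^sup>2"
    by simp
  then show ?thesis
    using fixed_point_tail_eq[OF fp, of 1] True l by (simp add: mult_left_le)
qed (use l in simp)

lemma fixed_point_le_power: "m \<in> {1..b} \<Longrightarrow> ext b y m \<le> l ^ 2 ^ (m - 1)"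
proof (induction m)
  case (Suc m)
  show ?case
  proof (cases "m = 0")
    case True
    then show ?thesis
      using fixed_point_1_le by simp
  next
    case False
    then have "m \<in> {1..b}"
      using Suc.prems by simp
    have "ext b y (Suc m) \<le> (ext b y m)\<^sup>2"
      using fixed_point_le_square[OF Suc.prems] by simp
    also have "\<dots> \<le> (l ^ 2 ^ (m - 1))\<^sup>2"
      using Suc.IH[OF \<open>m \<in> {1..b}\<close>] simplexS_ext_nonneg[OF fixed_point_simplexS[OF fp]]
      by (intro power_mono) auto
    also have "\<dots> = l ^ 2 ^ (Suc m - 1)"
      using False by (cases m) (simp_all add: power_mult[symmetric] mult.commute)
    finally show ?thesis .
  qed
qed simp

end

lemma power_le_half:
  fixes l :: real
  assumes "0 \<le> l" "l \<le> 1" "1 \<le> real n * (1 - l)"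
  shows "l ^ n \<le> 1 / 2"
proof -
  have "1 + real n * (1 - l) \<le> (2 - l) ^ n"
    using Bernoulli_inequality[of "1 - l" n] assms by simp
  then have "l ^ n * (1 + real n * (1 - l)) \<le> (l * (2 - l)) ^ n"
    using assms by (simp add: power_mult_distrib mult_left_mono)
  also have "\<dots> \<le> 1"
  proof -
    have "l * (2 - l) = 1 - (1 - l)\<^sup>2"
      by (simp add: power2_eq_square algebra_simps)
    moreover have "(1 - l)\<^sup>2 \<le> 1"
      using assms by (intro power_le_one) auto
    ultimately show ?thesis
      using assms by (intro power_le_one) auto
  qed
  finally have "l ^ n * (1 + real n * (1 - l)) \<le> 1" .
  moreover have "l ^ n * 2 \<le> l ^ n * (1 + real n * (1 - l))"
    using assms by (intro mult_left_mono) auto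
  ultimately show ?thesis
    by simp
qed

lemma one_plus_le_exp_decrement:
  fixes y z :: real
  assumes "0 \<le> y" "y \<le> 1 / 2" "z \<le> y\<^sup>2"
  shows "1 + y \<le> exp (2 * (y - z))"
proof -
  have "z \<le> y * (1 / 2)"
    using assms by (smt (verit) mult_left_mono power2_eq_square)
  then have "y \<le> 2 * (y - z)"
    by simp
  then show ?thesis
    using exp_ge_add_one_self[of y] by (smt (verit) exp_le_cancel_iff)
qed

lemma two_power_card_le:
  fixes X :: real
  assumes "finite H" "0 \<notin> H" "\<And>i. i \<in> H \<Longrightarrow> 2 ^ (i - 1) < X" "1 / 2 \<le> X"
  shows "2 ^ card H \<le> 2 * X"
proof (cases "H = {}")
  case False
  let ?M = "Max H"
  have "?M \<in> H"
    using assms(1) False by (rule Max_in)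
  have "H \<subseteq> {1..?M}"
  proof
    fix i
    assume "i \<in> H"
    moreover have "i \<le> ?M"
      using assms(1) \<open>i \<in> H\<close> by simp
    ultimately show "i \<in> {1..?M}"
      using assms(2) by (cases i) auto
  qed
  then have "card H \<le> ?M"
    using card_mono[of "{1..?M}" H] by simp
  then have "(2::real) ^ card H \<le> 2 ^ ?M"
    by (intro power_increasing) auto
  also have "\<dots> = 2 * 2 ^ (?M - 1)"
    using \<open>?M \<in> H\<close> assms(2) by (cases ?M) auto
  also have "\<dots> < 2 * X"
    using assms(3)[OF \<open>?M \<in> H\<close>] by simp
  finally show ?thesis
    by simp
qed (use assms in simp)

text \<open>A factor with \<open>Y\<^sub>i \<le> 1/2\<close> is paid for by the decrement \<open>Y\<^sub>i - Y\<^sub>i\<^sub>+\<^sub>1 \<ge> Y\<^sub>i / 2\<close>,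
  and these decrements telescope; each of the few indices with \<open>Y\<^sub>i > 1/2\<close> costs a factor 2.\<close>

lemma prod_one_plus_le:
  fixes Y :: "nat \<Rightarrow> real" and X :: real
  assumes bounds: "\<And>i. 0 \<le> Y i" "\<And>i. Y i \<le> 1" and antimono: "\<And>i. Y (Suc i) \<le> Y i"
    and square: "\<And>i. i \<in> {1..<b} \<Longrightarrow> Y (Suc i) \<le> (Y i)\<^sup>2"
    and large: "\<And>i. i \<in> {1..<b} \<Longrightarrow> 1 / 2 < Y i \<Longrightarrow> 2 ^ (i - 1) < X" and X: "1 / 2 \<le> X"
  shows "(\<Prod>i\<in>{1..<b}. 1 + Y i) \<le> 2 * exp 2 * X"
proof -
  define H where "H = {i\<in>{1..<b}. 1 / 2 < Y i}"
  have factor: "1 + Y i \<le> (if i \<in> H then 2 else 1) * exp (2 * (Y i - Y (Suc i)))"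
    if "i \<in> {1..<b}" for i
  proof (cases "i \<in> H")
    case True
    have "1 + Y i \<le> 2 * 1"
      using bounds(2)[of i] by simp
    also have "\<dots> \<le> 2 * exp (2 * (Y i - Y (Suc i)))"
      using antimono[of i] by simp
    finally show ?thesis
      using True by simp
  next
    case False
    then show ?thesis
      using that one_plus_le_exp_decrement[OF bounds(1) _ square] by (simp add: H_def)
  qed
  have "(\<Sum>i\<in>{1..<b}. Y i - Y (Suc i)) \<le> 1"
  proof (cases "1 \<le> b")
    case True
    then have "(\<Sum>i\<in>{1..<b}. Y i - Y (Suc i)) = Y 1 - Y b"
      using sum_Suc_diff'[of 1 b Y] by (simp add: sum_subtractf)
    then show ?thesis
      using bounds[of 1] bounds[of b] by simp
  qed simp
  then have telescope: "exp (2 * (\<Sum>i\<in>{1..<b}. Y i - Y (Suc i))) \<le> exp 2"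
    by simp
  have "(\<Prod>i\<in>{1..<b}. 1 + Y i) \<le> (\<Prod>i\<in>{1..<b}. (if i \<in> H then 2 else 1) * exp (2 * (Y i - Y (Suc i))))"
    using factor bounds(1) by (intro prod_mono) (simp add: add_nonneg_nonneg)
  also have "\<dots> = 2 ^ card H * exp (2 * (\<Sum>i\<in>{1..<b}. Y i - Y (Suc i)))"
    by (simp add: prod.distrib exp_sum sum_distrib_left prod.If_cases H_def Int_def conj_commute)
  also have "\<dots> \<le> 2 * X * exp 2"
    using two_power_card_le[of H X] large X telescope
    by (intro mult_mono) (auto simp: H_def)
  finally show ?thesis
    by (simp add: mult_ac)
qed

section \<open>Lyapunov weights\<close>

text \<open>The weights \<open>v\<^sub>k = d\<^sub>1 + \<dots> + d\<^sub>k\<close> have increments with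
  \<open>d\<^sub>k = (1 + 1/b) (1 + y\<^sub>k) d\<^sub>k\<^sub>+\<^sub>1\<close>: this absorbs any factor \<open>q \<le> 1 + y\<^sub>k\<close> in front of
  \<open>v\<^sub>k\<^sub>+\<^sub>1 - v\<^sub>k\<close> and leaves the margin \<open>d\<^sub>k / (b + 1)\<close>.\<close>

definition weight_increment :: "nat \<Rightarrow> (nat \<Rightarrow> real) \<Rightarrow> nat \<Rightarrow> real" where
  "weight_increment b y k = (1 + 1 / real b) ^ (b - k) * (\<Prod>i\<in>{k..<b}. 1 + ext b y i)"

definition weight :: "nat \<Rightarrow> (nat \<Rightarrow> real) \<Rightarrow> nat \<Rightarrow> real" where
  "weight b y k = (if k \<le> b then \<Sum>i\<in>{1..k}. weight_increment b y i else 0)"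

lemma weight_increment_eq_1: "b \<le> k \<Longrightarrow> weight_increment b y k = 1"
  by (simp add: weight_increment_def)

lemma weight_0 [simp]: "weight b y 0 = 0"
  by (simp add: weight_def)

lemma weight_Suc_b [simp]: "weight b y (Suc b) = 0"
  by (simp add: weight_def)

lemma weight_Suc: "Suc k \<le> b \<Longrightarrow> weight b y (Suc k) = weight b y k + weight_increment b y (Suc k)"
  by (simp add: weight_def)

context
  fixes b :: nat and y :: "nat \<Rightarrow> real"
  assumes b: "1 \<le> b" and ys: "y \<in> simplexS b"
begin

lemma weight_increment_ge_1: "1 \<le> weight_increment b y k"
  unfolding weight_increment_def
  using simplexS_ext_nonneg[OF ys]
  by (intro order.trans[OF _ mult_mono[OF one_le_power prod_ge_1]]) auto

lemma weight_increment_step: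
  assumes "k < b"
  shows "weight_increment b y k = (1 + 1 / real b) * (1 + ext b y k) * weight_increment b y (Suc k)"
proof -
  have "b - k = Suc (b - Suc k)"
    using assms by simp
  then show ?thesis
    unfolding weight_increment_def prod.atLeast_Suc_lessThan[OF assms] by (simp add: mult_ac)
qed

lemma weight_increment_antimono: "i \<le> j \<Longrightarrow> weight_increment b y j \<le> weight_increment b y i"
proof (rule lift_Suc_antimono_le[of "weight_increment b y"])
  fix k
  show "weight_increment b y (Suc k) \<le> weight_increment b y k"
  proof (cases "k < b")
    case True
    have "1 * 1 \<le> (1 + 1 / real b) * (1 + ext b y k)"
      using simplexS_ext_nonneg[OF ys, of k] by (intro mult_mono) auto
    then show ?thesis
      using weight_increment_step[OF True] weight_increment_ge_1[of "Suc k"]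
      by (simp add: mult_le_cancel_right2)
  qed (simp add: weight_increment_eq_1)
qed

lemma weight_nonneg: "0 \<le> weight b y k"
  unfolding weight_def using weight_increment_ge_1 by (auto intro: sum_nonneg order.trans[OF zero_le_one])

lemma weight_le_weight_b: "weight b y k \<le> weight b y b"
  unfolding weight_def using weight_increment_ge_1
  by (auto intro!: sum_mono2 sum_nonneg intro: order.trans[OF zero_le_one])

lemma weight_ge_increment_1: "k \<in> {1..b} \<Longrightarrow> weight_increment b y 1 \<le> weight b y k"
  unfolding weight_def using weight_increment_ge_1
  by (auto intro!: member_le_sum intro: order.trans[OF zero_le_one])

lemma weight_b_le: "weight b y b \<le> real b * weight_increment b y 1"
proof -
  have "weight b y b = (\<Sum>i\<in>{1..b}. weight_increment b y i)"
    by (simp add: weight_def)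
  also have "\<dots> \<le> (\<Sum>i\<in>{1..b}. weight_increment b y 1)"
    by (intro sum_mono weight_increment_antimono) auto
  finally show ?thesis
    by simp
qed

lemma weight_drift_le:
  assumes k: "k \<in> {1..b}" and q: "0 \<le> q" "q \<le> 1 + ext b y k"
  shows "(weight b y (k - 1) - weight b y k) + q * (weight b y (k + 1) - weight b y k)
         \<le> - (1 / ((real b + 1) * weight b y b)) * weight b y k"
proof -
  let ?d = "weight_increment b y" and ?V = "weight b y b"
  have V: "1 \<le> ?V"
    using weight_ge_increment_1[of b] weight_increment_ge_1[of 1] b by simp
  have "weight b y k / ?V \<le> 1"
    using weight_le_weight_b[of k] V by simp
  then have "weight b y k / ?V / (real b + 1) \<le> 1 / (real b + 1)"
    by (intro divide_right_mono) auto
  then have margin: "- 1 / (real b + 1) \<le> - (1 / ((real b + 1) * ?V)) * weight b y k"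
    by (simp add: mult.commute)
  have down: "weight b y (k - 1) - weight b y k = - ?d k"
    using weight_Suc[of "k - 1"] k by simp
  show ?thesis
  proof (cases "k < b")
    case True
    have "q * ?d (Suc k) \<le> (1 + ext b y k) * ?d (Suc k)"
      using q weight_increment_ge_1[of "Suc k"] by (intro mult_right_mono) auto
    also have "\<dots> = ?d k * (real b / (real b + 1))"
      using weight_increment_step[OF True] b by (simp add: field_simps)
    finally have "- ?d k + q * ?d (Suc k) \<le> - ?d k * (1 / (real b + 1))"
      using b by (simp add: field_simps)
    also have "\<dots> \<le> - 1 / (real b + 1)"
      using weight_increment_ge_1[of k] by (simp add: field_simps)
    finally show ?thesis
      using down weight_Suc[of k] True margin by simp
  next
    case False
    then have "k = b"
      using k by simp
    then have "(weight b y (k - 1) - weight b y k) + q * (weight b y (k + 1) - weight b y k) \<le> - 1"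
      using down q V weight_increment_eq_1[of b] by (simp add: mult_nonneg_nonneg)
    also have "\<dots> \<le> - 1 / (real b + 1)"
      by (simp add: field_simps)
    finally show ?thesis
      using margin by simp
  qed
qed

end

lemma weight_increment_1_le:
  assumes b: "1 \<le> b" and fp: "is_fixed_point b l y" and l: "0 \<le> l" "l < 1"
  shows "weight_increment b y 1 \<le> 2 * exp 3 / (1 - l)"
proof -
  have ys: "y \<in> simplexS b"
    using fp by (rule fixed_point_simplexS)
  have "(1 + 1 / real b) ^ (b - 1) \<le> (1 + 1 / real b) ^ b"
    by (intro power_increasing) auto
  also have "\<dots> \<le> exp (1 / real b) ^ b"
    by (intro power_mono) (auto simp: exp_ge_add_one_self[THEN order_trans])
  also have "\<dots> = exp 1"
    using b by (simp add: exp_of_nat_mult[symmetric])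
  finally have euler: "(1 + 1 / real b) ^ (b - 1) \<le> exp 1" .
  have large: "2 ^ (i - 1) < 1 / (1 - l)" if "i \<in> {1..b}" "1 / 2 < ext b y i" for i
  proof (rule ccontr)
    assume "\<not> 2 ^ (i - 1) < 1 / (1 - l)"
    then have "1 \<le> real (2 ^ (i - 1)) * (1 - l)"
      using l by (simp add: field_simps)
    then have "l ^ 2 ^ (i - 1) \<le> 1 / 2"
      using power_le_half l by simp
    then show False
      using fixed_point_le_power[OF fp l(1) less_imp_le[OF l(2)] that(1)] that(2) by simp
  qed
  have "(\<Prod>i\<in>{1..<b}. 1 + ext b y i) \<le> 2 * exp 2 * (1 / (1 - l))"
  proof (rule prod_one_plus_le)
    show "ext b y (Suc i) \<le> (ext b y i)\<^sup>2" if "i \<in> {1..<b}" for i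
      using fixed_point_le_square[OF fp l(1) less_imp_le[OF l(2)], of "Suc i"] that by simp
  qed (use large l simplexS_ext_nonneg[OF ys] simplexS_ext_le_1[OF ys] simplexS_ext_Suc_le[OF ys]
      in \<open>auto simp: field_simps\<close>)
  moreover have "0 \<le> 1 + ext b y i" for i
    using simplexS_ext_nonneg[OF ys, of i] by linarith
  then have "0 \<le> (\<Prod>i\<in>{1..<b}. 1 + ext b y i)"
    by (intro prod_nonneg) blast
  ultimately have "weight_increment b y 1 \<le> exp 1 * (2 * exp 2 * (1 / (1 - l)))"
    unfolding weight_increment_def using euler by (intro mult_mono) auto
  also have "\<dots> = 2 * exp 3 / (1 - l)"
    by (simp add: mult_exp_exp)
  finally show ?thesis .
qed

section \<open>Drift of the squared weighted Huber distance\<close>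

definition weighted_huber ::
    "nat \<Rightarrow> (nat \<Rightarrow> real) \<Rightarrow> real \<Rightarrow> (nat \<Rightarrow> real) \<Rightarrow> (nat \<Rightarrow> real) \<Rightarrow> real" where
  "weighted_huber b v e y x = (\<Sum>k\<in>{1..b}. v k * huber e (x k - y k))"

lemma weighted_huber_nonneg: "0 < e \<Longrightarrow> (\<And>k. 0 \<le> v k) \<Longrightarrow> 0 \<le> weighted_huber b v e y x"
  unfolding weighted_huber_def by (intro sum_nonneg mult_nonneg_nonneg huber_nonneg)

lemma weighted_huber_fun_upd:
  assumes k: "k \<in> {1..b}"
  shows "weighted_huber b v e y (x(k := w))
       = weighted_huber b v e y x + v k * (huber e (w - y k) - huber e (x k - y k))"
proof -
  have "weighted_huber b v e y (x(k := w)) = v k * huber e (w - y k) + (\<Sum>i\<in>{1..b} - {k}. v i * huber e (x i - y i))"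
    unfolding weighted_huber_def using k by (simp add: sum.remove)
  also have "\<dots> = v k * huber e (w - y k) + (weighted_huber b v e y x - v k * huber e (x k - y k))"
    unfolding weighted_huber_def using k by (simp add: sum_diff1)
  finally show ?thesis
    by (simp add: algebra_simps)
qed

lemma sum_shift_down:
  fixes f :: "nat \<Rightarrow> real"
  shows "(\<Sum>k\<in>{1..b}. f (k - 1)) = (\<Sum>k\<in>{1..b}. f k) + f 0 - f b"
  by (induction b) simp_all

lemma sum_shift_up:
  fixes f :: "nat \<Rightarrow> real"
  shows "(\<Sum>k\<in>{1..b}. f (k + 1)) = (\<Sum>k\<in>{1..b}. f k) + f (b + 1) - f 1"
  by (induction b) simp_all

lemma sum_by_parts_tridiagonal:
  fixes v a p :: "nat \<Rightarrow> real"
  assumes "a 0 = 0" "a (b + 1) = 0" "v 0 = 0" "v (b + 1) = 0"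
  shows "(\<Sum>k\<in>{1..b}. v k * (p (k - 1) * a (k - 1) - (1 + p k) * a k + a (k + 1)))
       = (\<Sum>k\<in>{1..b}. a k * ((v (k - 1) - v k) + p k * (v (k + 1) - v k)))"
proof -
  have "(\<Sum>k\<in>{1..b}. v k * p (k - 1) * a (k - 1)) = (\<Sum>k\<in>{1..b}. v (k + 1) * p k * a k)"
    using sum_shift_down[of "\<lambda>j. v (j + 1) * p j * a j" b] assms by (simp add: Suc_diff_1)
  moreover have "(\<Sum>k\<in>{1..b}. v k * a (k + 1)) = (\<Sum>k\<in>{1..b}. v (k - 1) * a k)"
    using sum_shift_up[of "\<lambda>j. v (j - 1) * a j" b] assms by simp
  ultimately show ?thesis
    by (simp add: algebra_simps sum.distrib sum_subtractf)
qed

lemma tridiagonal_term_le: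
  fixes g v p q a m z :: real
  assumes g: "\<bar>g\<bar> \<le> 1" "\<bar>m\<bar> - \<epsilon> \<le> g * m" and nonneg: "0 \<le> v" "0 \<le> p" "0 \<le> q"
  shows "v * g * (p * a - (1 + q) * m + z) \<le> v * (p * \<bar>a\<bar> - (1 + q) * \<bar>m\<bar> + \<bar>z\<bar>) + \<epsilon> * (v * (1 + q))"
proof -
  have gt: "g * t \<le> \<bar>t\<bar>" for t
    using g(1) abs_ge_self[of "g * t"] mult_right_mono[of "\<bar>g\<bar>" 1 "\<bar>t\<bar>"] by (simp add: abs_mult)
  have "p * (g * a) - (1 + q) * (g * m) + g * z \<le> p * \<bar>a\<bar> - (1 + q) * (\<bar>m\<bar> - \<epsilon>) + \<bar>z\<bar>"
    using gt g(2) nonneg by (intro add_mono diff_mono mult_left_mono) auto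
  then have "v * (p * (g * a) - (1 + q) * (g * m) + g * z) \<le> v * (p * \<bar>a\<bar> - (1 + q) * (\<bar>m\<bar> - \<epsilon>) + \<bar>z\<bar>)"
    using nonneg(1) by (rule mult_left_mono)
  then show ?thesis
    by (simp add: algebra_simps)
qed

lemma weighted_linear_drift_le:
  fixes v d g p :: "nat \<Rightarrow> real"
  assumes boundary: "d 0 = 0" "d (b + 1) = 0" "v 0 = 0" "v (b + 1) = 0"
    and g: "\<And>k. k \<in> {1..b} \<Longrightarrow> \<bar>g k\<bar> \<le> 1" "\<And>k. k \<in> {1..b} \<Longrightarrow> \<bar>d k\<bar> - \<epsilon> \<le> g k * d k"
    and nonneg: "\<And>k. 0 \<le> v k" "\<And>k. 0 \<le> p k"
    and weights: "\<And>k. k \<in> {1..b} \<Longrightarrow> (v (k - 1) - v k) + p k * (v (k + 1) - v k) \<le> - c * v k"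
  shows "(\<Sum>k\<in>{1..b}. v k * g k * (p (k - 1) * d (k - 1) - (1 + p k) * d k + d (k + 1)))
         \<le> - c * (\<Sum>k\<in>{1..b}. v k * \<bar>d k\<bar>) + \<epsilon> * (\<Sum>k\<in>{1..b}. v k * (1 + p k))"
proof -
  have termwise: "v k * g k * (p (k - 1) * d (k - 1) - (1 + p k) * d k + d (k + 1))
      \<le> v k * (p (k - 1) * \<bar>d (k - 1)\<bar> - (1 + p k) * \<bar>d k\<bar> + \<bar>d (k + 1)\<bar>) + \<epsilon> * (v k * (1 + p k))"
    if "k \<in> {1..b}" for k
    using g[OF that] nonneg by (intro tridiagonal_term_le) auto
  have "(\<Sum>k\<in>{1..b}. v k * (p (k - 1) * \<bar>d (k - 1)\<bar> - (1 + p k) * \<bar>d k\<bar> + \<bar>d (k + 1)\<bar>))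
      = (\<Sum>k\<in>{1..b}. \<bar>d k\<bar> * ((v (k - 1) - v k) + p k * (v (k + 1) - v k)))"
    using boundary by (intro sum_by_parts_tridiagonal) auto
  also have "\<dots> \<le> (\<Sum>k\<in>{1..b}. \<bar>d k\<bar> * (- c * v k))"
    by (intro sum_mono mult_left_mono weights) auto
  finally have adjoint: "(\<Sum>k\<in>{1..b}. v k * (p (k - 1) * \<bar>d (k - 1)\<bar> - (1 + p k) * \<bar>d k\<bar> + \<bar>d (k + 1)\<bar>))
      \<le> - c * (\<Sum>k\<in>{1..b}. v k * \<bar>d k\<bar>)"
    by (simp add: sum_distrib_left mult_ac)
  have "(\<Sum>k\<in>{1..b}. v k * g k * (p (k - 1) * d (k - 1) - (1 + p k) * d k + d (k + 1)))
      \<le> (\<Sum>k\<in>{1..b}. v k * (p (k - 1) * \<bar>d (k - 1)\<bar> - (1 + p k) * \<bar>d k\<bar> + \<bar>d (k + 1)\<bar>)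
            + \<epsilon> * (v k * (1 + p k)))"
    by (rule sum_mono[OF termwise])
  also have "\<dots> = (\<Sum>k\<in>{1..b}. v k * (p (k - 1) * \<bar>d (k - 1)\<bar> - (1 + p k) * \<bar>d k\<bar> + \<bar>d (k + 1)\<bar>))
      + \<epsilon> * (\<Sum>k\<in>{1..b}. v k * (1 + p k))"
    by (simp add: sum.distrib sum_distrib_left)
  finally show ?thesis
    using adjoint by linarith
qed

lemma huber_square_increment_le:
  assumes e: "0 < e" and h: "\<bar>h\<bar> \<le> e" and L: "0 \<le> L" and v: "0 \<le> v"
  shows "(L + v * (huber e (d + h) - huber e d))\<^sup>2 - L\<^sup>2
         \<le> 2 * L * (v * (huber_deriv e d * h + h\<^sup>2 / (2 * e))) + v\<^sup>2 * h\<^sup>2"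
proof -
  define \<Delta> where "\<Delta> = v * (huber e (d + h) - huber e d)"
  have "\<Delta> \<le> v * (huber_deriv e d * h + h\<^sup>2 / (2 * e))"
    unfolding \<Delta>_def using huber_taylor[OF e h, of d] v by (intro mult_left_mono) auto
  moreover have "\<bar>\<Delta>\<bar> \<le> v * \<bar>h\<bar>"
    unfolding \<Delta>_def using huber_lipschitz[OF e, of "d + h" d] v by (simp add: abs_mult mult_left_mono)
  then have "\<Delta>\<^sup>2 \<le> (v * h)\<^sup>2"
    using v by (simp add: abs_le_square_iff[symmetric] abs_mult)
  moreover have "(L + \<Delta>)\<^sup>2 - L\<^sup>2 = 2 * L * \<Delta> + \<Delta>\<^sup>2"
    by (simp add: power2_eq_square algebra_simps)
  ultimately show ?thesis
    unfolding \<Delta>_def[symmetric] using L by (smt (verit) mult_left_mono power_mult_distrib)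
qed

lemma birth_death_square_increment_le:
  fixes N :: nat
  assumes N: "1 \<le> N" and e: "0 < e" "1 / real N \<le> e" and L: "0 \<le> L" and v: "0 \<le> v"
    and rates: "0 \<le> \<alpha>" "0 \<le> \<beta>" "\<alpha> + \<beta> \<le> 2"
  shows "real N * \<alpha> * ((L + v * (huber e (d + 1 / real N) - huber e d))\<^sup>2 - L\<^sup>2)
       + real N * \<beta> * ((L + v * (huber e (d - 1 / real N) - huber e d))\<^sup>2 - L\<^sup>2)
     \<le> 2 * L * v * huber_deriv e d * (\<alpha> - \<beta>) + 2 * L * v / (real N * e) + 2 * v\<^sup>2 / real N"
proof -
  define h where "h = 1 / real N"
  define g where "g = huber_deriv e d"
  have h: "0 < h" "h \<le> e" "real N * h = 1"
    using N e unfolding h_def by auto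
  have "real N * \<alpha> * ((L + v * (huber e (d + h) - huber e d))\<^sup>2 - L\<^sup>2)
      + real N * \<beta> * ((L + v * (huber e (d - h) - huber e d))\<^sup>2 - L\<^sup>2)
      \<le> real N * \<alpha> * (2 * L * (v * (g * h + h\<^sup>2 / (2 * e))) + v\<^sup>2 * h\<^sup>2)
      + real N * \<beta> * (2 * L * (v * (g * (- h) + h\<^sup>2 / (2 * e))) + v\<^sup>2 * h\<^sup>2)"
    using huber_square_increment_le[OF e(1) _ L v, of h d] huber_square_increment_le[OF e(1) _ L v, of "- h" d]
      h rates unfolding g_def by (intro add_mono mult_left_mono) auto
  also have "\<dots> = 2 * L * v * g * (\<alpha> - \<beta>) * (real N * h) + (\<alpha> + \<beta>) * (L * v / e + v\<^sup>2) * h * (real N * h)"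
    using e by (simp add: field_simps power2_eq_square)
  also have "\<dots> = 2 * L * v * g * (\<alpha> - \<beta>) + (\<alpha> + \<beta>) * (L * v / e + v\<^sup>2) * h"
    using h(3) by simp
  also have "\<dots> \<le> 2 * L * v * g * (\<alpha> - \<beta>) + 2 * (L * v / e + v\<^sup>2) * h"
    using rates h e L v by (intro add_left_mono mult_right_mono) auto
  also have "\<dots> = 2 * L * v * g * (\<alpha> - \<beta>) + 2 * L * v / (real N * e) + 2 * v\<^sup>2 / real N"
    using e(1) N unfolding h_def by (simp add: field_simps)
  finally show ?thesis
    unfolding h_def g_def by simp
qed

lemma arrival_rate_bounds:
  assumes "x \<in> simplexS b" "0 \<le> l" "l \<le> 1"
  shows "0 \<le> arrival_rate b l x k" "arrival_rate b l x k \<le> 1"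
proof -
  have "(ext b x k)\<^sup>2 \<le> (ext b x (k - 1))\<^sup>2" "(ext b x (k - 1))\<^sup>2 \<le> 1"
    using simplexS_ext_antimono[OF assms(1), of "k - 1" k] simplexS_ext_nonneg[OF assms(1)]
      simplexS_ext_le_1[OF assms(1)] by (auto intro: power_mono power_le_one)
  then show "0 \<le> arrival_rate b l x k" "arrival_rate b l x k \<le> 1"
    unfolding arrival_rate_def using assms(2,3) zero_le_power2[of "ext b x k"]
    by (simp, intro mult_le_one) linarith+
qed

lemma departure_rate_bounds:
  assumes "x \<in> simplexS b"
  shows "0 \<le> departure_rate b x k" "departure_rate b x k \<le> 1"
  unfolding departure_rate_def
  using simplexS_ext_Suc_le[OF assms, of k] simplexS_ext_le_1[OF assms, of k]
    simplexS_ext_nonneg[OF assms, of "k + 1"] by simp_all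

lemma rates_sub_fixed_point_eq:
  assumes "is_fixed_point b l y" "k \<in> {1..b}"
  shows "arrival_rate b l x k - departure_rate b x k
       = l * (ext b x (k - 1) + ext b y (k - 1)) * (ext b x (k - 1) - ext b y (k - 1))
         - (1 + l * (ext b x k + ext b y k)) * (ext b x k - ext b y k)
         + (ext b x (k + 1) - ext b y (k + 1))"
proof -
  have "arrival_rate b l y k - departure_rate b y k = 0"
    using assms drift_eq_rates[of b l y k] unfolding is_fixed_point_def by auto
  then show ?thesis
    unfolding arrival_rate_def departure_rate_def by (simp add: power2_eq_square algebra_simps)
qed

lemma linearised_coefficient_bounds:
  assumes xs: "x \<in> simplexS b" and ys: "y \<in> simplexS b" and l: "0 \<le> l" "l \<le> 1"
  shows "0 \<le> l * (ext b x j + ext b y j)" "l * (ext b x j + ext b y j) \<le> 1 + ext b y j"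
    "l * (ext b x j + ext b y j) \<le> 2"
proof -
  have "0 \<le> ext b x j + ext b y j" "ext b x j \<le> 1" "ext b y j \<le> 1"
    using simplexS_ext_nonneg[OF xs, of j] simplexS_ext_nonneg[OF ys, of j]
      simplexS_ext_le_1[OF xs, of j] simplexS_ext_le_1[OF ys, of j] by auto
  moreover have "l * (ext b x j + ext b y j) \<le> ext b x j + ext b y j"
    using l calculation(1) by (intro mult_left_le_one_le) auto
  ultimately show "0 \<le> l * (ext b x j + ext b y j)" "l * (ext b x j + ext b y j) \<le> 1 + ext b y j"
    "l * (ext b x j + ext b y j) \<le> 2"
    using l by auto
qed

lemma weighted_huber_linear_drift_le:
  assumes xs: "x \<in> simplexS b" and fp: "is_fixed_point b l y" and l: "0 \<le> l" "l \<le> 1"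
    and e: "0 < e" and c: "0 \<le> c"
    and v: "v 0 = 0" "v (b + 1) = 0" "\<And>k. 0 \<le> v k"
    and weights: "\<And>k q. k \<in> {1..b} \<Longrightarrow> 0 \<le> q \<Longrightarrow> q \<le> 1 + ext b y k \<Longrightarrow>
                    (v (k - 1) - v k) + q * (v (k + 1) - v k) \<le> - c * v k"
  shows "(\<Sum>k\<in>{1..b}. v k * huber_deriv e (x k - y k) * (arrival_rate b l x k - departure_rate b x k))
         \<le> - c * weighted_huber b v e y x + 3 * e * (\<Sum>k\<in>{1..b}. v k)"
proof -
  have ys: "y \<in> simplexS b"
    using fp by (rule fixed_point_simplexS)
  define d where "d j = ext b x j - ext b y j" for j
  define p where "p j = l * (ext b x j + ext b y j)" for j
  have p: "0 \<le> p j" "p j \<le> 1 + ext b y j" "p j \<le> 2" for j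
    unfolding p_def using linearised_coefficient_bounds[OF xs ys l] by auto
  have "(\<Sum>k\<in>{1..b}. v k * huber_deriv e (x k - y k) * (arrival_rate b l x k - departure_rate b x k))
      = (\<Sum>k\<in>{1..b}. v k * huber_deriv e (d k) * (p (k - 1) * d (k - 1) - (1 + p k) * d k + d (k + 1)))"
    by (intro sum.cong refl) (simp add: rates_sub_fixed_point_eq[OF fp] d_def p_def)
  also have "\<dots> \<le> - c * (\<Sum>k\<in>{1..b}. v k * \<bar>d k\<bar>) + e * (\<Sum>k\<in>{1..b}. v k * (1 + p k))"
  proof (rule weighted_linear_drift_le[where v = v and p = p and d = d and g = "\<lambda>k. huber_deriv e (d k)"])
    show "(v (k - 1) - v k) + p k * (v (k + 1) - v k) \<le> - c * v k" if "k \<in> {1..b}" for k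
      using weights[OF that p(1) p(2)] .
  qed (use v p abs_huber_deriv_le_1[OF e] huber_deriv_mult_ge[OF e] in \<open>auto simp: d_def\<close>)
  also have "\<dots> \<le> - c * weighted_huber b v e y x + e * (\<Sum>k\<in>{1..b}. v k * 3)"
  proof -
    have "weighted_huber b v e y x \<le> (\<Sum>k\<in>{1..b}. v k * \<bar>d k\<bar>)"
      unfolding weighted_huber_def d_def using v huber_le_abs[OF e]
      by (intro sum_mono mult_left_mono) auto
    then have "- c * (\<Sum>k\<in>{1..b}. v k * \<bar>d k\<bar>) \<le> - c * weighted_huber b v e y x"
      using c by (simp add: mult_left_mono)
    moreover have "e * (\<Sum>k\<in>{1..b}. v k * (1 + p k)) \<le> e * (\<Sum>k\<in>{1..b}. v k * 3)"
      using v p e by (intro mult_left_mono sum_mono) auto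
    ultimately show ?thesis
      by linarith
  qed
  finally show ?thesis
    by (simp add: sum_distrib_right[symmetric] mult_ac)
qed

lemma generator_weighted_huber_sq_eq:
  assumes x: "x \<in> state_space N b" and N: "1 \<le> N"
  shows "generator N b l (\<lambda>z. (weighted_huber b v e y z)\<^sup>2) x = (\<Sum>k\<in>{1..b}.
      real N * arrival_rate b l x k
        * ((weighted_huber b v e y x + v k * (huber e (x k - y k + 1 / real N) - huber e (x k - y k)))\<^sup>2
           - (weighted_huber b v e y x)\<^sup>2)
    + real N * departure_rate b x k
        * ((weighted_huber b v e y x + v k * (huber e (x k - y k - 1 / real N) - huber e (x k - y k)))\<^sup>2
           - (weighted_huber b v e y x)\<^sup>2))"
proof -
  have shift: "x k + 1 / real N - y k = x k - y k + 1 / real N"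
    "x k - 1 / real N - y k = x k - y k - 1 / real N" for k
    by simp_all
  show ?thesis
    unfolding generator_eq[OF x N] by (intro sum.cong refl) (simp add: weighted_huber_fun_upd shift)
qed

lemma generator_weighted_huber_sq_le_linear:
  assumes N: "1 \<le> N" and x: "x \<in> state_space N b" and l: "0 \<le> l" "l \<le> 1"
    and e: "0 < e" "1 / real N \<le> e" and v: "\<And>k. 0 \<le> v k"
  shows "generator N b l (\<lambda>z. (weighted_huber b v e y z)\<^sup>2) x
     \<le> 2 * weighted_huber b v e y x
           * (\<Sum>k\<in>{1..b}. v k * huber_deriv e (x k - y k) * (arrival_rate b l x k - departure_rate b x k))
       + 2 * weighted_huber b v e y x * (\<Sum>k\<in>{1..b}. v k) / (real N * e)
       + 2 * (\<Sum>k\<in>{1..b}. (v k)\<^sup>2) / real N"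
proof -
  let ?L = "weighted_huber b v e y x"
  have xs: "x \<in> simplexS b"
    using x unfolding state_space_def by auto
  have L: "0 \<le> ?L"
    by (rule weighted_huber_nonneg[OF e(1)]) (rule v)
  have "generator N b l (\<lambda>z. (weighted_huber b v e y z)\<^sup>2) x = (\<Sum>k\<in>{1..b}.
      real N * arrival_rate b l x k
        * ((?L + v k * (huber e (x k - y k + 1 / real N) - huber e (x k - y k)))\<^sup>2 - ?L\<^sup>2)
    + real N * departure_rate b x k
        * ((?L + v k * (huber e (x k - y k - 1 / real N) - huber e (x k - y k)))\<^sup>2 - ?L\<^sup>2))"
    by (rule generator_weighted_huber_sq_eq[OF x N])
  also have "\<dots> \<le> (\<Sum>k\<in>{1..b}. 2 * ?L * v k * huber_deriv e (x k - y k) * (arrival_rate b l x k - departure_rate b x k)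
      + 2 * ?L * v k / (real N * e) + 2 * (v k)\<^sup>2 / real N)"
  proof (intro sum_mono birth_death_square_increment_le)
    show "arrival_rate b l x k + departure_rate b x k \<le> 2" for k
      using arrival_rate_bounds(2)[OF xs l, of k] departure_rate_bounds(2)[OF xs, of k] by linarith
  qed (use arrival_rate_bounds(1)[OF xs l] departure_rate_bounds(1)[OF xs]
      L v N e in auto)
  also have "\<dots> = 2 * ?L
        * (\<Sum>k\<in>{1..b}. v k * huber_deriv e (x k - y k) * (arrival_rate b l x k - departure_rate b x k))
      + 2 * ?L * (\<Sum>k\<in>{1..b}. v k) / (real N * e) + 2 * (\<Sum>k\<in>{1..b}. (v k)\<^sup>2) / real N"
  proof -
    have "(\<Sum>k\<in>{1..b}. 2 * ?L * v k * huber_deriv e (x k - y k) * (arrival_rate b l x k - departure_rate b x k)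
        + 2 * ?L * v k / (real N * e) + 2 * (v k)\<^sup>2 / real N)
      = (\<Sum>k\<in>{1..b}. 2 * ?L * (v k * huber_deriv e (x k - y k) * (arrival_rate b l x k - departure_rate b x k))
        + 2 * ?L * v k / (real N * e) + 2 * (v k)\<^sup>2 / real N)"
      by (simp add: mult.assoc)
    then show ?thesis
      by (simp only: sum.distrib sum_divide_distrib[symmetric] sum_distrib_left[symmetric])
  qed
  finally show ?thesis .
qed

lemma two_mult_le_young:
  fixes a b c :: real
  assumes "0 < c"
  shows "2 * a * b \<le> c * a\<^sup>2 + b\<^sup>2 / c"
proof -
  have "c * a\<^sup>2 + b\<^sup>2 / c - 2 * a * b = (c * a - b)\<^sup>2 / c"
    using assms by (simp add: field_simps power2_eq_square)
  then show ?thesis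
    using assms by (smt (verit) divide_nonneg_pos zero_le_power2)
qed

lemma generator_weighted_huber_sq_le:
  assumes N: "1 \<le> N" and x: "x \<in> state_space N b" and fp: "is_fixed_point b l y"
    and l: "0 \<le> l" "l \<le> 1" and e: "0 < e" "1 / real N \<le> e" and c: "0 < c"
    and v: "v 0 = 0" "v (b + 1) = 0" "\<And>k. 0 \<le> v k"
    and weights: "\<And>k q. k \<in> {1..b} \<Longrightarrow> 0 \<le> q \<Longrightarrow> q \<le> 1 + ext b y k \<Longrightarrow>
                    (v (k - 1) - v k) + q * (v (k + 1) - v k) \<le> - c * v k"
  shows "generator N b l (\<lambda>z. (weighted_huber b v e y z)\<^sup>2) x
     \<le> - c * (weighted_huber b v e y x)\<^sup>2
       + (((3 * e + 1 / (real N * e)) * (\<Sum>k\<in>{1..b}. v k))\<^sup>2 / c + 2 * (\<Sum>k\<in>{1..b}. (v k)\<^sup>2) / real N)"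
proof -
  let ?L = "weighted_huber b v e y x" and ?V = "\<Sum>k\<in>{1..b}. v k"
  have xs: "x \<in> simplexS b"
    using x unfolding state_space_def by auto
  have L: "0 \<le> ?L"
    by (rule weighted_huber_nonneg[OF e(1)]) (rule v(3))
  have "generator N b l (\<lambda>z. (weighted_huber b v e y z)\<^sup>2) x
      \<le> 2 * ?L * (- c * ?L + 3 * e * ?V) + 2 * ?L * ?V / (real N * e) + 2 * (\<Sum>k\<in>{1..b}. (v k)\<^sup>2) / real N"
  proof -
    have "(\<Sum>k\<in>{1..b}. v k * huber_deriv e (x k - y k) * (arrival_rate b l x k - departure_rate b x k))
        \<le> - c * ?L + 3 * e * ?V"
      by (rule weighted_huber_linear_drift_le[OF xs fp l e(1) less_imp_le[OF c] v(1,2)])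
        (fact v(3), fact weights)
    then show ?thesis
      using generator_weighted_huber_sq_le_linear[OF N x l e, of v y] v(3) L
      by (smt (verit) mult_left_mono)
  qed
  also have "2 * ?L * (- c * ?L + 3 * e * ?V) + 2 * ?L * ?V / (real N * e)
      = - 2 * c * ?L\<^sup>2 + 2 * ?L * ((3 * e + 1 / (real N * e)) * ?V)"
    by (simp add: power2_eq_square algebra_simps)
  finally show ?thesis
    using two_mult_le_young[OF c, of ?L "(3 * e + 1 / (real N * e)) * ?V"] by simp
qed

section \<open>Stationary estimate\<close>

lemma sum_squares_le_square_sum:
  fixes a :: "'a \<Rightarrow> real"
  assumes "\<And>k. k \<in> A \<Longrightarrow> 0 \<le> a k"
  shows "(\<Sum>k\<in>A. (a k)\<^sup>2) \<le> (\<Sum>k\<in>A. a k)\<^sup>2"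
  using assms
proof (induction A rule: infinite_finite_induct)
  case (insert j A)
  have "0 \<le> a j" "0 \<le> (\<Sum>k\<in>A. a k)"
    using insert.prems by (auto intro: sum_nonneg)
  then have "(a j)\<^sup>2 + (\<Sum>k\<in>A. a k)\<^sup>2 \<le> (a j + (\<Sum>k\<in>A. a k))\<^sup>2"
    by (simp add: power2_eq_square algebra_simps)
  then show ?case
    using insert by simp
qed simp_all

lemma sum_sq_le_weighted_huber:
  assumes P: "0 < P" and e: "0 < e" and v: "\<And>k. k \<in> {1..b} \<Longrightarrow> P \<le> v k"
  shows "(\<Sum>k\<in>{1..b}. (x k - y k)\<^sup>2) \<le> 2 * (weighted_huber b v e y x)\<^sup>2 / P\<^sup>2 + (real b)\<^sup>2 * e\<^sup>2 / 2"
proof -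
  let ?S = "\<Sum>k\<in>{1..b}. \<bar>x k - y k\<bar>" and ?L = "weighted_huber b v e y x"
  have "P * (?S - real b * e / 2) = (\<Sum>k\<in>{1..b}. P * (\<bar>x k - y k\<bar> - e / 2))"
    by (simp add: sum_distrib_left[symmetric] sum_subtractf)
  also have "\<dots> \<le> (\<Sum>k\<in>{1..b}. v k * huber e (x k - y k))"
  proof (intro sum_mono)
    fix k
    assume "k \<in> {1..b}"
    have "P * (\<bar>x k - y k\<bar> - e / 2) \<le> P * huber e (x k - y k)"
      using P abs_le_huber[OF e] by (intro mult_left_mono) auto
    also have "\<dots> \<le> v k * huber e (x k - y k)"
      using v[OF \<open>k \<in> {1..b}\<close>] huber_nonneg[OF e] by (intro mult_right_mono) auto
    finally show "P * (\<bar>x k - y k\<bar> - e / 2) \<le> v k * huber e (x k - y k)" .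
  qed
  finally have "?S \<le> ?L / P + real b * e / 2"
    using P unfolding weighted_huber_def by (simp add: field_simps)
  then have "?S\<^sup>2 \<le> (?L / P + real b * e / 2)\<^sup>2"
    by (intro power_mono) (auto intro: sum_nonneg)
  also have "\<dots> \<le> 2 * (?L / P)\<^sup>2 + 2 * (real b * e / 2)\<^sup>2"
    using zero_le_power2[of "?L / P - real b * e / 2"] by (simp add: power2_eq_square algebra_simps)
  finally have "?S\<^sup>2 \<le> 2 * ?L\<^sup>2 / P\<^sup>2 + (real b)\<^sup>2 * e\<^sup>2 / 2"
    by (simp add: power_divide power_mult_distrib mult.commute)
  moreover have "(\<Sum>k\<in>{1..b}. (x k - y k)\<^sup>2) \<le> ?S\<^sup>2"
    using sum_squares_le_square_sum[of "{1..b}" "\<lambda>k. \<bar>x k - y k\<bar>"] by simp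
  ultimately show ?thesis
    by linarith
qed

lemma inverse_sqrt_bounds:
  fixes N :: nat
  assumes N: "1 \<le> N" and e: "e = 1 / sqrt (real N)"
  shows "0 < e" "1 / real N \<le> e" "3 * e + 1 / (real N * e) = 4 * e" "e\<^sup>2 = 1 / real N"
proof -
  show e_pos: "0 < e" and e_sq: "e\<^sup>2 = 1 / real N"
    using N unfolding e by (auto simp: power_divide)
  have "e \<le> 1"
    using N unfolding e by simp
  then show "1 / real N \<le> e"
    using e_pos by (simp add: power2_eq_square mult_left_le_one_le flip: e_sq)
  have "real N * e * e = 1"
    using e_sq N by (simp add: power2_eq_square field_simps)
  then show "3 * e + 1 / (real N * e) = 4 * e"
    using e_pos N by (simp add: field_simps)
qed

lemma weight_sums_le:
  assumes b: "1 \<le> b" and ys: "y \<in> simplexS b"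
  shows "1 \<le> (real b + 1) * weight b y b"
    and "(\<Sum>k\<in>{1..b}. weight b y k) \<le> (real b + 1) * weight b y b"
    and "(\<Sum>k\<in>{1..b}. (weight b y k)\<^sup>2) \<le> ((real b + 1) * weight b y b)\<^sup>2"
proof -
  have "1 \<le> weight b y b"
    using weight_ge_increment_1[OF b ys, of b] weight_increment_ge_1[OF b ys, of 1] b by simp
  then have "1 * 1 \<le> (real b + 1) * weight b y b"
    by (intro mult_mono) auto
  then show "1 \<le> (real b + 1) * weight b y b"
    by simp
  have "(\<Sum>k\<in>{1..b}. weight b y k) \<le> (\<Sum>k\<in>{1..b}. weight b y b)"
    by (intro sum_mono weight_le_weight_b[OF b ys])
  then show sum_le: "(\<Sum>k\<in>{1..b}. weight b y k) \<le> (real b + 1) * weight b y b"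
    using weight_nonneg[OF b ys, of b] by (simp add: algebra_simps)
  have "(\<Sum>k\<in>{1..b}. (weight b y k)\<^sup>2) \<le> (\<Sum>k\<in>{1..b}. weight b y k)\<^sup>2"
    using weight_nonneg[OF b ys] by (intro sum_squares_le_square_sum)
  also have "\<dots> \<le> ((real b + 1) * weight b y b)\<^sup>2"
    using sum_le weight_nonneg[OF b ys] by (intro power_mono sum_nonneg) auto
  finally show "(\<Sum>k\<in>{1..b}. (weight b y k)\<^sup>2) \<le> ((real b + 1) * weight b y b)\<^sup>2" .
qed

lemma drift_constant_le:
  fixes W S1 S2 N :: real
  assumes W: "1 \<le> W" and S1: "0 \<le> S1" "S1 \<le> W" and S2: "S2 \<le> W\<^sup>2" and N: "0 < N"
  shows "16 * S1\<^sup>2 * W\<^sup>2 / N + 2 * S2 * W / N \<le> 18 * W ^ 4 / N"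
proof -
  have "16 * S1\<^sup>2 * W\<^sup>2 \<le> 16 * W ^ 4" "2 * S2 * W \<le> 2 * W ^ 3"
    using S1 S2 W by (auto intro!: mult_mono power_mono simp: power2_eq_square power4_eq_xxxx power3_eq_cube)
  moreover have "W ^ 3 \<le> W ^ 4"
    using W by (intro power_increasing) auto
  ultimately have "16 * S1\<^sup>2 * W\<^sup>2 + 2 * S2 * W \<le> 18 * W ^ 4"
    by linarith
  then show ?thesis
    using N by (simp add: add_divide_distrib[symmetric] divide_right_mono)
qed

lemma exp_weighted_huber_sq_le:
  fixes N b :: nat
  assumes N: "1 \<le> N" and b: "1 \<le> b" and l: "0 \<le> l" "l \<le> 1"
    and st: "is_stationary N b l \<pi>" and fp: "is_fixed_point b l y"
  shows "(\<Sum>x\<in>state_space N b. \<pi> x * (weighted_huber b (weight b y) (1 / sqrt (real N)) y x)\<^sup>2)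
         \<le> 18 * ((real b + 1) * weight b y b) ^ 4 / real N"
proof -
  have ys: "y \<in> simplexS b"
    using fp by (rule fixed_point_simplexS)
  define W where "W = (real b + 1) * weight b y b"
  define e where "e = 1 / sqrt (real N)"
  define S1 where "S1 = (\<Sum>k\<in>{1..b}. weight b y k)"
  define S2 where "S2 = (\<Sum>k\<in>{1..b}. (weight b y k)\<^sup>2)"
  note e = inverse_sqrt_bounds[OF N e_def]
  note sums = weight_sums_le[OF b ys, folded W_def S1_def S2_def]
  have "(\<Sum>x\<in>state_space N b. \<pi> x * (weighted_huber b (weight b y) e y x)\<^sup>2)
      \<le> (((3 * e + 1 / (real N * e)) * S1)\<^sup>2 / (1 / W) + 2 * S2 / real N) / (1 / W)"
  proof (rule stationary_drift_bound[OF st])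
    fix x
    assume "x \<in> state_space N b"
    then show "generator N b l (\<lambda>z. (weighted_huber b (weight b y) e y z)\<^sup>2) x
        \<le> - (1 / W) * (weighted_huber b (weight b y) e y x)\<^sup>2
          + (((3 * e + 1 / (real N * e)) * S1)\<^sup>2 / (1 / W) + 2 * S2 / real N)"
      unfolding S1_def S2_def
      by (intro generator_weighted_huber_sq_le[OF N _ fp l e(1,2)])
        (use sums(1) weight_nonneg[OF b ys] weight_drift_le[OF b ys] in \<open>auto simp: W_def\<close>)
  qed (use sums(1) in simp)
  also have "\<dots> = 16 * S1\<^sup>2 * W\<^sup>2 / real N + 2 * S2 * W / real N"
    using sums(1) unfolding e(3) power_mult_distrib e(4) by (simp add: field_simps power2_eq_square)
  also have "\<dots> \<le> 18 * W ^ 4 / real N"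
    using sums N weight_nonneg[OF b ys] unfolding S1_def
    by (intro drift_constant_le) (auto intro: sum_nonneg)
  finally show ?thesis
    unfolding e_def W_def .
qed

lemma exp_sq_dist_le_weighted_huber:
  assumes st: "is_stationary N b l \<pi>" and P: "0 < P" and e: "0 < e"
    and v: "\<And>k. k \<in> {1..b} \<Longrightarrow> P \<le> v k"
  shows "exp_sq_dist N b \<pi> y
         \<le> 2 / P\<^sup>2 * (\<Sum>x\<in>state_space N b. \<pi> x * (weighted_huber b v e y x)\<^sup>2) + (real b)\<^sup>2 * e\<^sup>2 / 2"
proof -
  let ?S = "state_space N b" and ?L = "weighted_huber b v e y"
  have pi: "\<And>x. x \<in> ?S \<Longrightarrow> 0 \<le> \<pi> x" "(\<Sum>x\<in>?S. \<pi> x) = 1"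
    using st unfolding is_stationary_def by auto
  have "exp_sq_dist N b \<pi> y \<le> (\<Sum>x\<in>?S. \<pi> x * (2 * (?L x)\<^sup>2 / P\<^sup>2 + (real b)\<^sup>2 * e\<^sup>2 / 2))"
    unfolding exp_sq_dist_def using sum_sq_le_weighted_huber[OF P e v]
    by (intro sum_mono mult_left_mono pi(1))
  also have "\<dots> = 2 / P\<^sup>2 * (\<Sum>x\<in>?S. \<pi> x * (?L x)\<^sup>2) + (real b)\<^sup>2 * e\<^sup>2 / 2 * (\<Sum>x\<in>?S. \<pi> x)"
  proof -
    have "(\<Sum>x\<in>?S. \<pi> x * (2 * (?L x)\<^sup>2 / P\<^sup>2 + (real b)\<^sup>2 * e\<^sup>2 / 2))
        = (\<Sum>x\<in>?S. 2 / P\<^sup>2 * (\<pi> x * (?L x)\<^sup>2) + (real b)\<^sup>2 * e\<^sup>2 / 2 * \<pi> x)"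
      by (intro sum.cong refl) (simp add: field_simps)
    then show ?thesis
      by (simp only: sum.distrib sum_distrib_left)
  qed
  finally show ?thesis
    using pi(2) by simp
qed

lemma error_constant_le:
  fixes b P W N :: real
  assumes b: "1 \<le> b" and P: "1 \<le> P" and W: "0 \<le> W" "W \<le> 2 * b\<^sup>2 * P" and N: "0 < N"
  shows "2 / P\<^sup>2 * (18 * W ^ 4 / N) + b\<^sup>2 / (2 * N) \<le> 577 * b ^ 8 * P\<^sup>2 / N"
proof -
  have "W ^ 4 \<le> (2 * b\<^sup>2 * P) ^ 4"
    using W by (intro power_mono) auto
  also have "\<dots> = 16 * b ^ 8 * P ^ 4"
    by (simp add: power_mult_distrib flip: power_mult)
  finally have "36 * W ^ 4 \<le> 576 * b ^ 8 * P ^ 4"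
    by linarith
  then have "36 * W ^ 4 / P\<^sup>2 \<le> 576 * b ^ 8 * P ^ 4 / P\<^sup>2"
    by (intro divide_right_mono) auto
  also have "\<dots> = 576 * b ^ 8 * P\<^sup>2"
    using P by (simp add: power2_eq_square power4_eq_xxxx)
  finally have W4: "36 * W ^ 4 / P\<^sup>2 \<le> 576 * b ^ 8 * P\<^sup>2" .
  have "b\<^sup>2 \<le> b ^ 8 * 1"
    using b by (simp add: power_increasing)
  also have "\<dots> \<le> b ^ 8 * P\<^sup>2"
    using P b by (intro mult_left_mono) (auto simp: one_le_power)
  finally have "36 * W ^ 4 / P\<^sup>2 + b\<^sup>2 / 2 \<le> 577 * b ^ 8 * P\<^sup>2"
    using W4 zero_le_power2[of b] by linarith
  then have "(36 * W ^ 4 / P\<^sup>2 + b\<^sup>2 / 2) / N \<le> 577 * b ^ 8 * P\<^sup>2 / N"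
    using N by (intro divide_right_mono) auto
  moreover have "2 / P\<^sup>2 * (18 * W ^ 4 / N) + b\<^sup>2 / (2 * N) = (36 * W ^ 4 / P\<^sup>2 + b\<^sup>2 / 2) / N"
    by (simp add: add_divide_distrib)
  ultimately show ?thesis
    by simp
qed

lemma exp_sq_dist_le:
  fixes N b :: nat
  assumes N: "1 \<le> N" and b: "1 \<le> b" and l: "0 \<le> l" "l \<le> 1"
    and st: "is_stationary N b l \<pi>" and fp: "is_fixed_point b l y"
  shows "exp_sq_dist N b \<pi> y \<le> 577 * real b ^ 8 * (weight_increment b y 1)\<^sup>2 / real N"
proof -
  define P where "P = weight_increment b y 1"
  define W where "W = (real b + 1) * weight b y b"
  have ys: "y \<in> simplexS b"
    using fp by (rule fixed_point_simplexS)
  have P: "1 \<le> P"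
    unfolding P_def by (rule weight_increment_ge_1[OF b ys])
  have "W \<le> (2 * real b) * (real b * P)"
    unfolding W_def P_def using b weight_b_le[OF b ys] weight_nonneg[OF b ys, of b]
    by (intro mult_mono) auto
  then have W: "0 \<le> W" "W \<le> 2 * (real b)\<^sup>2 * P"
    using weight_nonneg[OF b ys, of b] unfolding W_def by (auto simp: power2_eq_square mult_ac)
  have "exp_sq_dist N b \<pi> y
      \<le> 2 / P\<^sup>2 * (\<Sum>x\<in>state_space N b. \<pi> x * (weighted_huber b (weight b y) (1 / sqrt (real N)) y x)\<^sup>2)
        + (real b)\<^sup>2 * (1 / sqrt (real N))\<^sup>2 / 2"
    using P weight_ge_increment_1[OF b ys] N unfolding P_def
    by (intro exp_sq_dist_le_weighted_huber[OF st]) auto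
  also have "\<dots> \<le> 2 / P\<^sup>2 * (18 * W ^ 4 / real N) + (real b)\<^sup>2 / (2 * real N)"
    using exp_weighted_huber_sq_le[OF N b l st fp] N unfolding W_def
    by (intro add_mono mult_left_mono) (auto simp: power_divide)
  also have "\<dots> \<le> 577 * real b ^ 8 * P\<^sup>2 / real N"
    using b P W N by (intro error_constant_le) auto
  finally show ?thesis
    unfolding P_def .
qed

lemma lam_bounds:
  assumes "0 < \<gamma>" "\<gamma> \<le> 1" "0 < \<alpha>" "1 \<le> N"
  shows "0 \<le> lam \<gamma> \<alpha> N" "lam \<gamma> \<alpha> N < 1" "1 - lam \<gamma> \<alpha> N = \<gamma> / real N powr \<alpha>"
proof -
  have "1 \<le> real N powr \<alpha>"
    using assms by (intro ge_one_powr_ge_zero) auto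
  then have "0 < \<gamma> / real N powr \<alpha>" "\<gamma> / real N powr \<alpha> \<le> 1"
    using assms by (auto simp: divide_le_eq intro!: divide_pos_pos)
  then show "0 \<le> lam \<gamma> \<alpha> N" "lam \<gamma> \<alpha> N < 1" "1 - lam \<gamma> \<alpha> N = \<gamma> / real N powr \<alpha>"
    unfolding lam_def by auto
qed

lemma exp_sq_dist_le_powr:
  fixes \<gamma> \<alpha> \<xi> C :: real and N b :: nat
  assumes \<gamma>: "0 < \<gamma>" "\<gamma> \<le> 1" and \<alpha>: "0 < \<alpha>" and N: "1 \<le> N" and b: "1 \<le> b"
    and b_le: "real b \<le> C * ln (real N)"
    and large: "2308 * exp 6 * C ^ 8 / \<gamma>\<^sup>2 * ln (real N) ^ 8 \<le> real N powr (7 * \<xi>)"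
    and st: "is_stationary N b (lam \<gamma> \<alpha> N) \<pi>" and fp: "is_fixed_point b (lam \<gamma> \<alpha> N) y"
  shows "exp_sq_dist N b \<pi> y \<le> 1 / real N powr (1 - 4 * \<alpha> - 7 * \<xi>)"
proof -
  define P where "P = weight_increment b y 1"
  note l = lam_bounds[OF \<gamma> \<alpha> N]
  have "1 \<le> P" "P \<le> 2 * exp 3 / (\<gamma> / real N powr \<alpha>)"
    using weight_increment_ge_1[OF b fixed_point_simplexS[OF fp]] weight_increment_1_le[OF b fp l(1,2)]
    unfolding P_def l(3) by simp_all
  then have "P\<^sup>2 \<le> (2 * exp 3 / (\<gamma> / real N powr \<alpha>))\<^sup>2"
    by (intro power_mono) auto
  moreover have "real b ^ 8 \<le> (C * ln (real N)) ^ 8"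
    using b_le by (intro power_mono) auto
  ultimately have "577 * real b ^ 8 * P\<^sup>2 \<le> 577 * (C * ln (real N)) ^ 8 * (2 * exp 3 / (\<gamma> / real N powr \<alpha>))\<^sup>2"
    by (intro mult_mono mult_left_mono) auto
  also have "\<dots> = 2308 * exp 6 * C ^ 8 / \<gamma>\<^sup>2 * ln (real N) ^ 8 * real N powr (2 * \<alpha>)"
  proof -
    have "(exp 3)\<^sup>2 = exp (6::real)"
      by (simp add: power2_eq_square mult_exp_exp)
    moreover have "(real N powr \<alpha>)\<^sup>2 = real N powr (2 * \<alpha>)"
      using N by (simp add: powr_power)
    ultimately show ?thesis
      by (simp add: power_mult_distrib power_divide)
  qed
  also have "\<dots> \<le> real N powr (7 * \<xi>) * real N powr (2 * \<alpha>)"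
    using large by (intro mult_right_mono) auto
  finally have "577 * real b ^ 8 * P\<^sup>2 / real N \<le> real N powr (7 * \<xi>) * real N powr (2 * \<alpha>) / real N"
    using N by (intro divide_right_mono) auto
  also have "\<dots> = real N powr (- (1 - 2 * \<alpha> - 7 * \<xi>))"
    using N by (simp add: powr_add[symmetric] powr_diff)
  also have "\<dots> \<le> real N powr (- (1 - 4 * \<alpha> - 7 * \<xi>))"
    using N \<alpha> by (intro powr_mono) auto
  also have "\<dots> = 1 / real N powr (1 - 4 * \<alpha> - 7 * \<xi>)"
    by (rule powr_minus_divide)
  finally show ?thesis
    using exp_sq_dist_le[OF N b l(1) less_imp_le[OF l(2)] st fp] unfolding P_def by linarith
qed

theorem lemma1:
  fixes \<gamma> \<alpha> \<xi> :: real and b :: "nat \<Rightarrow> nat"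
  assumes "0 < \<gamma>" "\<gamma> \<le> 1" "0 < \<alpha>" "\<alpha> < 0.25" "0 < \<xi>"
    and "\<forall>N. 1 \<le> b N"
    and "(\<lambda>N. real (b N)) \<in> O(\<lambda>N. ln (real N))"
  shows "\<forall>\<^sub>F N in sequentially. \<forall>\<pi> sstar.
           is_stationary N (b N) (lam \<gamma> \<alpha> N) \<pi> \<and>
           is_fixed_point (b N) (lam \<gamma> \<alpha> N) sstar \<longrightarrow>
           exp_sq_dist N (b N) \<pi> sstar \<le> 1 / real N powr (1 - 4 * \<alpha> - 7 * \<xi>)"
proof -
  obtain C where "0 < C" and b_le: "\<forall>\<^sub>F N in sequentially. norm (real (b N)) \<le> C * norm (ln (real N))"
    using landau_o.bigE[OF assms(7)] by blast
  define A where "A = 2308 * exp 6 * C ^ 8 / \<gamma>\<^sup>2"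
  have "\<forall>\<^sub>F x in at_top. A * ln x ^ 8 \<le> x powr (7 * \<xi>)"
    using \<open>0 < \<xi>\<close> by real_asymp
  then have large: "\<forall>\<^sub>F N in sequentially. A * ln (real N) ^ 8 \<le> real N powr (7 * \<xi>)"
    using filterlim_real_sequentially unfolding filterlim_iff by blast
  show ?thesis
    using b_le large eventually_ge_at_top[of 1]
  proof eventually_elim
    case (elim N)
    then have "real (b N) \<le> C * ln (real N)"
      by simp
    then show ?case
      using exp_sq_dist_le_powr[OF assms(1-3) \<open>1 \<le> N\<close> _ _ elim(2)[unfolded A_def]] assms(6) by blast
  qed
qed

end
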